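(* Let $\frac{\log n}{n}\le p\le\frac{2\log n}{n}$. Then with probability $1-o(1)$ the graph $G\sim\mathcal G(n,p)$ has the following property. Suppose $B=(S\cup W,E')$ is a bipartite (not necessarily induced) subgraph of $G$ with parts $S$ and $W$ such that (i) $|S|\le\frac{n}{\log^{0.9}n}$, (ii) $|W|=(1+o(1))\frac{n}{\log\log n}$, and (iii) $d_B(v)\ge\frac{\log n}{(\log\log n)^2}$ for every $v\in S$. Then $B$ contains a $\log^{0.2}n$-matching from $S$ to $W$, i.e., a subgraph $M\subseteq B$ in which every $s\in S$ has exactly $\log^{0.2}n$ neighbors and every $w\in W$ has degree at most $1$.
   Context: $\mathcal G(n,p)$ is the binomial random graph on $[n]$ in which each pair is an edge independently with probability $p$. Rounding is ignored. Asymptotics as $n\to\infty$. *)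

theory Defs
  imports "HOL-Probability.Probability"
begin

text \<open>Vertex set [n] is rendered as {..<n}; edges are 2-element sets.\<close>

definition all_pairs :: "nat \<Rightarrow> nat set set" where
  "all_pairs n = {{u, v} | u v. u < n \<and> v < n \<and> u \<noteq> v}"

definition gnp :: "nat \<Rightarrow> real \<Rightarrow> nat set set pmf" where
  "gnp n p = map_pmf (\<lambda>f. {e \<in> all_pairs n. f e})
                     (Pi_pmf (all_pairs n) False (\<lambda>_. bernoulli_pmf p))"

definition deg :: "nat set set \<Rightarrow> nat \<Rightarrow> nat" where
  "deg F v = card {e \<in> F. v \<in> e}"

text \<open>The graph property of the lemma, for a graph with edge set E on [n]
  and a given error function value d (the o(1) in |W| = (1+o(1)) n / log log n).\<close>
definition matching_property :: "nat \<Rightarrow> real \<Rightarrow> nat set set \<Rightarrow> bool" where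
  "matching_property n d E \<longleftrightarrow>
    (\<forall>S W E'.
       S \<subseteq> {..<n} \<and> W \<subseteq> {..<n} \<and> S \<inter> W = {} \<and>
       E' \<subseteq> E \<and> E' \<subseteq> {{s, w} | s w. s \<in> S \<and> w \<in> W} \<and>
       real (card S) \<le> real n / (ln (real n)) powr 0.9 \<and>
       (1 - d) * (real n / ln (ln (real n))) \<le> real (card W) \<and>
       real (card W) \<le> (1 + d) * (real n / ln (ln (real n))) \<and>
       (\<forall>v\<in>S. real (deg E' v) \<ge> ln (real n) / (ln (ln (real n)))\<^sup>2)
     \<longrightarrow> (\<exists>M \<subseteq> E'.
            (\<forall>s\<in>S. deg M s = nat \<lfloor>(ln (real n)) powr 0.2\<rfloor>) \<and>
            (\<forall>w\<in>W. deg M w \<le> 1)))"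

end

theory Submission
  imports Defs "HOL-Real_Asymp.Real_Asymp"
begin

text \<open>Let k = log^0.2 n. If B has no k-matching from S to W, Hall's theorem applied to k copies
  of every vertex of S yields a nonempty X \<subseteq> S with |N_B(X)| < k|X|. Padding N_B(X) gives vertex sets
  X, Y of sizes t \<le> n / log^0.9 n and kt between which G has at least t log n / (log log n)^2 edges.
  A union bound over t, X and Y, using (n choose t)(n choose kt) \<le> (en/t)^((k+1)t) and
  P(Bin(kt^2, p) \<ge> a) \<le> (kt^2 p)^a / a!, bounds the probability of such a dense pair by a
  geometric series \<Sum>_t q^t \<le> 2q with q \<rightarrow> 0.\<close>

definition hall_condition :: "'i set \<Rightarrow> ('i \<Rightarrow> 'b set) \<Rightarrow> bool" where
  "hall_condition I A \<longleftrightarrow> (\<forall>J\<subseteq>I. card J \<le> card (\<Union>(A ` J)))"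

lemma hall_condition_subset: "hall_condition I A \<Longrightarrow> K \<subseteq> I \<Longrightarrow> hall_condition K A"
  unfolding hall_condition_def by auto

lemma hall_condition_remove_tight:
  assumes fin: "finite I" "\<forall>i\<in>I. finite (A i)" and hall: "hall_condition I A"
    and J: "J \<subseteq> I" and tight: "card (\<Union>(A ` J)) \<le> card J"
  shows "hall_condition (I - J) (\<lambda>i. A i - \<Union>(A ` J))"
  unfolding hall_condition_def
proof (intro allI impI)
  fix K assume K: "K \<subseteq> I - J"
  define U where "U = \<Union>(A ` J)"
  define V where "V = \<Union>((\<lambda>i. A i - U) ` K)"
  have finJ: "finite J" and finK: "finite K" using fin J K by (auto intro: finite_subset)
  have finU: "finite U" using fin J finJ unfolding U_def by auto
  have "finite (\<Union>(A ` K))" using fin K finK by auto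
  moreover have "V \<subseteq> \<Union>(A ` K)" unfolding V_def by auto
  ultimately have finV: "finite V" by (rule finite_subset[rotated])
  have "card U = card J"
    using hall J tight unfolding hall_condition_def U_def by (simp add: le_antisym)
  have "card K + card J = card (K \<union> J)" using K finK finJ by (subst card_Un_disjoint) auto
  also have "\<dots> \<le> card (\<Union>(A ` (K \<union> J)))"
    using hall K J unfolding hall_condition_def by (metis Diff_subset Un_subset_iff subset_trans)
  also have "\<Union>(A ` (K \<union> J)) = V \<union> U" unfolding U_def V_def by auto
  also have "card (V \<union> U) = card V + card U" using finU finV by (subst card_Un_disjoint) (auto simp: V_def)
  finally show "card K \<le> card V" using \<open>card U = card J\<close> by simp
qed

lemma hall_condition_remove_one:
  assumes fin: "finite I" "\<forall>i\<in>I. finite (A i)"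
    and surplus: "\<forall>J\<subseteq>I. J \<noteq> {} \<longrightarrow> J \<noteq> I \<longrightarrow> card J < card (\<Union>(A ` J))"
    and i0: "i0 \<in> I"
  shows "hall_condition (I - {i0}) (\<lambda>i. A i - {x})"
  unfolding hall_condition_def
proof (intro allI impI)
  fix K assume K: "K \<subseteq> I - {i0}"
  show "card K \<le> card (\<Union>i\<in>K. A i - {x})"
  proof (cases "K = {}")
    case False
    have finU: "finite (\<Union>(A ` K))" using fin K by (auto intro: finite_subset)
    have "card K < card (\<Union>(A ` K))" using surplus K False i0 by auto
    also have "\<dots> \<le> card (insert x (\<Union>(A ` K)))" using finU by (intro card_mono) auto
    also have "\<dots> = Suc (card (\<Union>(A ` K) - {x}))" using finU by (rule card.insert_remove)
    finally show ?thesis by simp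
  qed simp
qed

lemma sdr_Un:
  assumes J: "J \<subseteq> I" and f: "inj_on f J" "\<forall>i\<in>J. f i \<in> A i \<inter> U"
    and g: "inj_on g (I - J)" "\<forall>i\<in>I - J. g i \<in> A i - U"
  shows "\<exists>h. inj_on h I \<and> (\<forall>i\<in>I. h i \<in> A i)"
proof -
  define h where "h = (\<lambda>i. if i \<in> J then f i else g i)"
  have fU: "f i \<in> U" if "i \<in> J" for i using f that by blast
  have gU: "g i \<notin> U" if "i \<in> I - J" for i using g that by blast
  have "inj_on h I"
  proof (rule inj_onI)
    fix i j assume "i \<in> I" "j \<in> I" "h i = h j"
    with f g show "i = j" unfolding h_def by (auto split: if_splits dest: inj_onD) (metis fU gU DiffI)+
  qed
  then show ?thesis using f g unfolding h_def by auto
qed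

theorem hall_marriage:
  assumes "finite I" "\<forall>i\<in>I. finite (A i)" "hall_condition I A"
  shows "\<exists>f. inj_on f I \<and> (\<forall>i\<in>I. f i \<in> A i)"
  using assms
proof (induction "card I" arbitrary: I A rule: less_induct)
  case less
  note fin = less.prems(1,2) and hall = less.prems(3)
  show ?case
  proof (cases "\<exists>J\<subseteq>I. J \<noteq> {} \<and> J \<noteq> I \<and> card (\<Union>(A ` J)) \<le> card J")
    case True
    \<comment> \<open>A tight proper subfamily J is matched onto its own union; the rest avoids that union.\<close>
    then obtain J where J: "J \<subseteq> I" "J \<noteq> {}" "J \<noteq> I" "card (\<Union>(A ` J)) \<le> card J" by blast
    have finJ: "finite J" using J fin by (auto intro: finite_subset)
    have "card J < card I" using J fin by (intro psubset_card_mono) auto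
    then have "\<exists>f. inj_on f J \<and> (\<forall>i\<in>J. f i \<in> A i)"
      using fin J by (intro less.hyps[OF _ finJ _ hall_condition_subset[OF hall J(1)]]) auto
    then obtain f where f: "inj_on f J" "\<forall>i\<in>J. f i \<in> A i \<inter> \<Union>(A ` J)" by blast
    have "0 < card J" using finJ J(2) by auto
    then have "card (I - J) < card I" using finJ J(1) \<open>card J < card I\<close> by (simp add: card_Diff_subset)
    then have "\<exists>g. inj_on g (I - J) \<and> (\<forall>i\<in>I - J. g i \<in> A i - \<Union>(A ` J))"
      using fin by (intro less.hyps[OF _ _ _ hall_condition_remove_tight[OF fin hall J(1,4)]]) auto
    then show ?thesis using sdr_Un[OF J(1) f] by blast
  next
    case False
    \<comment> \<open>Every proper subfamily has surplus, so any choice for one index can be extended.\<close>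
    then have surplus: "\<forall>J\<subseteq>I. J \<noteq> {} \<longrightarrow> J \<noteq> I \<longrightarrow> card J < card (\<Union>(A ` J))"
      by (auto simp: not_le)
    show ?thesis
    proof (cases "I = {}")
      case False
      then obtain i0 where i0: "i0 \<in> I" by auto
      have "1 \<le> card (A i0)" using hall[unfolded hall_condition_def, rule_format, of "{i0}"] i0 by simp
      then obtain x where x: "x \<in> A i0" by fastforce
      have "card (I - {i0}) < card I" using i0 fin by (meson card_Diff1_less)
      then have "\<exists>g. inj_on g (I - {i0}) \<and> (\<forall>i\<in>I - {i0}. g i \<in> A i - {x})"
        using fin by (intro less.hyps[OF _ _ _ hall_condition_remove_one[OF fin surplus i0]]) auto
      then show ?thesis using sdr_Un[of "{i0}" I "\<lambda>_. x" A "{x}"] i0 x by auto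
    qed simp
  qed
qed

definition cross_pairs :: "nat set \<Rightarrow> nat set \<Rightarrow> nat set set" where
  "cross_pairs X Y = {{s, w} | s w. s \<in> X \<and> w \<in> Y}"

definition nbhd :: "nat set set \<Rightarrow> nat set \<Rightarrow> nat set \<Rightarrow> nat set" where
  "nbhd E W X = {w\<in>W. \<exists>s\<in>X. {s, w} \<in> E}"

lemma cross_pairs_eq_image: "cross_pairs X Y = (\<lambda>(s, w). {s, w}) ` (X \<times> Y)"
  unfolding cross_pairs_def by auto

lemma finite_cross_pairs: "finite X \<Longrightarrow> finite Y \<Longrightarrow> finite (cross_pairs X Y)"
  unfolding cross_pairs_eq_image by auto

lemma card_cross_pairs_le: "finite X \<Longrightarrow> finite Y \<Longrightarrow> card (cross_pairs X Y) \<le> card X * card Y"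
  unfolding cross_pairs_eq_image by (metis card_cartesian_product card_image_le finite_cartesian_product)

lemma deg_star_forest:
  fixes f :: "nat \<times> nat \<Rightarrow> nat"
  assumes disj: "S \<inter> W = {}" and inj: "inj_on f (S \<times> {..<k})" and W: "f ` (S \<times> {..<k}) \<subseteq> W"
  defines "M \<equiv> (\<lambda>i. {fst i, f i}) ` (S \<times> {..<k})"
  shows "\<forall>s\<in>S. deg M s = k" and "\<forall>w\<in>W. deg M w \<le> 1"
proof -
  show "\<forall>s\<in>S. deg M s = k"
  proof
    fix s assume s: "s \<in> S"
    have "{e \<in> M. s \<in> e} = (\<lambda>j. {s, f (s, j)}) ` {..<k}"
      using s disj W unfolding M_def by (auto simp: image_iff)
    moreover have "inj_on (\<lambda>j. {s, f (s, j)}) {..<k}"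
    proof (rule inj_onI)
      fix j j' assume j: "j \<in> {..<k}" "j' \<in> {..<k}" and eq: "{s, f (s, j)} = {s, f (s, j')}"
      have "f (s, j) \<in> W" "f (s, j') \<in> W" using s j W by auto
      then have "f (s, j) \<noteq> s" "f (s, j') \<noteq> s" using s disj by auto
      then have "f (s, j) = f (s, j')" using eq by (auto simp: doubleton_eq_iff)
      then show "j = j'" using inj s j by (auto dest: inj_onD)
    qed
    ultimately show "deg M s = k" unfolding deg_def by (simp add: card_image)
  qed
  show "\<forall>w\<in>W. deg M w \<le> 1"
  proof
    fix w assume w: "w \<in> W"
    define P where "P = S \<times> {..<k} \<inter> f -` {w}"
    have injP: "inj_on f P" using inj unfolding P_def by (rule inj_on_subset) auto
    have "f ` P \<subseteq> {w}" unfolding P_def by auto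
    then have finP: "finite P" and "card P \<le> 1"
      using card_image[OF injP] card_mono[of "{w}" "f ` P"] finite_imageD[OF _ injP]
      by (auto intro: finite_subset)
    moreover have "{e \<in> M. w \<in> e} \<subseteq> (\<lambda>i. {fst i, f i}) ` P"
      using w disj unfolding M_def P_def by auto
    ultimately show "deg M w \<le> 1" unfolding deg_def
      by (meson card_image_le card_mono finite_imageI le_trans)
  qed
qed

lemma k_matching_of_hall:
  assumes fin: "finite S" "finite W" and disj: "S \<inter> W = {}"
    and hall: "\<forall>X\<subseteq>S. k * card X \<le> card (nbhd E W X)"
  shows "\<exists>M\<subseteq>E. (\<forall>s\<in>S. deg M s = k) \<and> (\<forall>w\<in>W. deg M w \<le> 1)"
proof -
  define A where "A = (\<lambda>i::nat \<times> nat. nbhd E W {fst i})"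
  have "hall_condition (S \<times> {..<k}) A"
    unfolding hall_condition_def
  proof (intro allI impI)
    fix J assume J: "J \<subseteq> S \<times> {..<k}"
    have "J \<subseteq> fst ` J \<times> {..<k}" using J by force
    then have "card J \<le> k * card (fst ` J)"
      using fin J by (metis card_cartesian_product card_lessThan card_mono finite_SigmaI
          finite_imageI finite_lessThan finite_subset mult.commute)
    also have "\<dots> \<le> card (nbhd E W (fst ` J))" using J by (intro hall[rule_format]) auto
    also have "nbhd E W (fst ` J) = \<Union>(A ` J)" unfolding A_def nbhd_def by auto
    finally show "card J \<le> card (\<Union>(A ` J))" .
  qed
  moreover have "finite (S \<times> {..<k})" "\<forall>i\<in>S \<times> {..<k}. finite (A i)"
    using fin unfolding A_def nbhd_def by auto
  ultimately obtain f where f: "inj_on f (S \<times> {..<k})" "\<forall>i\<in>S \<times> {..<k}. f i \<in> A i"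
    using hall_marriage by blast
  define M where "M = (\<lambda>i. {fst i, f i}) ` (S \<times> {..<k})"
  have "f ` (S \<times> {..<k}) \<subseteq> W" and "M \<subseteq> E"
    using f(2) unfolding A_def nbhd_def M_def by auto
  then show ?thesis using deg_star_forest[OF disj f(1)] unfolding M_def by blast
qed

lemma card_edges_to_nbhd_ge:
  assumes fin: "finite S" "finite W" and disj: "S \<inter> W = {}" and E: "E \<subseteq> cross_pairs S W"
    and X: "X \<subseteq> S" and deg: "\<forall>v\<in>X. D \<le> real (deg E v)"
  shows "D * real (card X) \<le> real (card (E \<inter> cross_pairs X (nbhd E W X)))"
proof -
  define F where "F = (\<lambda>s. {e \<in> E. s \<in> e})"
  have finX: "finite X" using X fin by (auto intro: finite_subset)
  have finF: "\<forall>s\<in>X. finite (F s)"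
    using finite_subset[OF E finite_cross_pairs[OF fin]] unfolding F_def by auto
  \<comment> \<open>Every edge of E has exactly one endpoint in S, so the stars at distinct s are disjoint.\<close>
  have edge: "\<exists>s' w. s' \<in> S \<and> w \<in> W \<and> e = {s', w}" if "e \<in> E" for e
    using that E unfolding cross_pairs_def by blast
  have disjF: "\<forall>s\<in>X. \<forall>s'\<in>X. s \<noteq> s' \<longrightarrow> F s \<inter> F s' = {}"
    using X disj by (fastforce simp: F_def dest: edge)
  have "\<Union>(F ` X) \<subseteq> E \<inter> cross_pairs X (nbhd E W X)"
  proof
    fix e assume "e \<in> \<Union>(F ` X)"
    then obtain s where s: "s \<in> X" "e \<in> E" "s \<in> e" unfolding F_def by auto
    then obtain w where "w \<in> W" "e = {s, w}" using edge X disj by blast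
    then show "e \<in> E \<inter> cross_pairs X (nbhd E W X)"
      using s unfolding cross_pairs_def nbhd_def by auto
  qed
  then have "card (\<Union>(F ` X)) \<le> card (E \<inter> cross_pairs X (nbhd E W X))"
    using finX fin by (intro card_mono) (auto intro!: finite_cross_pairs simp: nbhd_def)
  have "D * real (card X) = (\<Sum>s\<in>X. D)" by simp
  also have "\<dots> \<le> (\<Sum>s\<in>X. real (card (F s)))"
    using deg unfolding F_def deg_def by (intro sum_mono) auto
  also have "\<dots> = real (card (\<Union>(F ` X)))"
    using card_UN_disjoint[OF finX finF disjF] by simp
  finally show ?thesis using \<open>card (\<Union>(F ` X)) \<le> _\<close> by linarith
qed

lemma cross_pairs_mono: "X \<subseteq> X' \<Longrightarrow> Y \<subseteq> Y' \<Longrightarrow> cross_pairs X Y \<subseteq> cross_pairs X' Y'"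
  unfolding cross_pairs_def by blast

lemma dense_pair_of_no_k_matching:
  assumes S: "S \<subseteq> {..<n}" and W: "W \<subseteq> {..<n}" and disj: "S \<inter> W = {}"
    and E': "E' \<subseteq> E" "E' \<subseteq> cross_pairs S W" and deg: "\<forall>v\<in>S. D \<le> real (deg E' v)"
    and no_match: "\<not> (\<exists>M\<subseteq>E'. (\<forall>s\<in>S. deg M s = k) \<and> (\<forall>w\<in>W. deg M w \<le> 1))"
    and kS: "k * card S \<le> n"
  obtains X Y where "X \<subseteq> S" "X \<noteq> {}" "Y \<subseteq> {..<n}" "card Y = k * card X"
    "D * real (card X) \<le> real (card (E \<inter> cross_pairs X Y))"
proof -
  have fin: "finite S" "finite W" using S W by (auto intro: finite_subset)
  obtain X where X: "X \<subseteq> S" "card (nbhd E' W X) < k * card X"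
    using k_matching_of_hall[OF fin disj] no_match by (meson not_le)
  define N where "N = nbhd E' W X"
  have "X \<noteq> {}" using X by auto
  have "N \<subseteq> {..<n}" using W unfolding N_def nbhd_def by auto
  moreover have "k * card X \<le> card {..<n}"
    using kS card_mono[OF fin(1) X(1)] by (metis card_lessThan le_trans mult_le_mono2)
  moreover have "card N \<le> k * card X" using X unfolding N_def by simp
  ultimately obtain Y where Y: "N \<subseteq> Y" "Y \<subseteq> {..<n}" "card Y = k * card X"
    using exists_subset_between[of N "k * card X" "{..<n}"] by auto
  have "D * real (card X) \<le> real (card (E' \<inter> cross_pairs X N))"
    unfolding N_def using card_edges_to_nbhd_ge[OF fin disj E'(2) X(1)] deg X(1) by auto
  also have "\<dots> \<le> real (card (E \<inter> cross_pairs X Y))"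
    using E'(1) cross_pairs_mono[OF order_refl Y(1)] X(1) fin Y(2)
    by (intro of_nat_mono card_mono) (auto intro!: finite_cross_pairs intro: finite_subset)
  finally show ?thesis using that X(1) \<open>X \<noteq> {}\<close> Y(2,3) by blast
qed

lemma finite_all_pairs: "finite (all_pairs n)"
proof -
  have "all_pairs n \<subseteq> Pow {..<n}" unfolding all_pairs_def by auto
  then show ?thesis by (rule finite_subset) auto
qed

lemma prob_gnp_superset_le:
  assumes "0 \<le> p" "p \<le> 1" "finite A"
  shows "measure_pmf.prob (gnp n p) {E. A \<subseteq> E} \<le> p ^ card A"
proof (cases "A \<subseteq> all_pairs n")
  case True
  define B where "B = (\<lambda>e. if e \<in> A then {True} else (UNIV :: bool set))"
  have "(\<lambda>f. {e \<in> all_pairs n. f e}) -` {E. A \<subseteq> E} = Pi (all_pairs n) B"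
    using True unfolding B_def by (auto simp: Pi_def)
  then have "measure_pmf.prob (gnp n p) {E. A \<subseteq> E}
      = (\<Prod>e\<in>all_pairs n. measure_pmf.prob (bernoulli_pmf p) (B e))"
    unfolding gnp_def measure_map_pmf by (simp add: measure_Pi_pmf_Pi[OF finite_all_pairs])
  also have "\<dots> = (\<Prod>e\<in>all_pairs n. if e \<in> A then p else 1)"
    unfolding B_def using assms by (intro prod.cong) (auto simp: measure_pmf_single)
  also have "\<dots> = p ^ card A"
    using True by (simp add: prod.If_cases[OF finite_all_pairs] Int_absorb1)
  finally show ?thesis by simp
next
  case False
  then have "(\<lambda>f. {e \<in> all_pairs n. f e}) -` {E. A \<subseteq> E} = {}" by auto
  then show ?thesis using assms unfolding gnp_def measure_map_pmf by simp
qed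

lemma prob_gnp_card_inter_ge:
  assumes "0 \<le> p" "p \<le> 1" "finite P"
  shows "measure_pmf.prob (gnp n p) {E. a \<le> card (E \<inter> P)} \<le> real (card P choose a) * p ^ a"
proof -
  define I where "I = {A. A \<subseteq> P \<and> card A = a}"
  have finI: "finite I" unfolding I_def using assms by auto
  have "{E. a \<le> card (E \<inter> P)} \<subseteq> (\<Union>A\<in>I. {E. A \<subseteq> E})"
  proof
    fix E assume "E \<in> {E. a \<le> card (E \<inter> P)}"
    then obtain A where "A \<subseteq> E \<inter> P" "card A = a" by (meson mem_Collect_eq obtain_subset_with_card_n)
    then show "E \<in> (\<Union>A\<in>I. {E. A \<subseteq> E})" unfolding I_def by auto
  qed
  then have "measure_pmf.prob (gnp n p) {E. a \<le> card (E \<inter> P)}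
      \<le> measure_pmf.prob (gnp n p) (\<Union>A\<in>I. {E. A \<subseteq> E})"
    by (intro measure_pmf.finite_measure_mono) auto
  also have "\<dots> \<le> (\<Sum>A\<in>I. measure_pmf.prob (gnp n p) {E. A \<subseteq> E})"
    using finI by (intro measure_pmf.finite_measure_subadditive_finite) auto
  also have "\<dots> \<le> (\<Sum>A\<in>I. p ^ a)"
    using assms by (intro sum_mono)
      (auto simp: I_def intro!: prob_gnp_superset_le[THEN order_trans] intro: finite_subset)
  also have "\<dots> = real (card P choose a) * p ^ a" unfolding I_def using assms by (simp add: n_subsets)
  finally show ?thesis .
qed

lemma power_div_fact_le_exp:
  fixes x :: real assumes "0 \<le> x"
  shows "x ^ j / fact j \<le> exp x"
proof -
  have "(\<Sum>n\<in>{j}. inverse (fact n) * x ^ n) \<le> (\<Sum>n. inverse (fact n) * x ^ n)"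
    using assms by (intro sum_le_suminf[OF summable_exp]) auto
  then show ?thesis by (simp add: exp_def divide_inverse ac_simps)
qed

lemma power_div_fact_le:
  fixes y :: real assumes "0 \<le> y" "1 \<le> j"
  shows "y ^ j / fact j \<le> (exp 1 * y / real j) ^ j"
proof -
  have "real j ^ j / fact j \<le> exp (real j)" by (rule power_div_fact_le_exp) simp
  then have "y ^ j * real j ^ j \<le> y ^ j * (exp (real j) * fact j)"
    using assms by (intro mult_left_mono) (auto simp: divide_le_eq)
  moreover have "exp 1 ^ j = exp (real j)" using exp_of_nat_mult[of j "1::real"] by simp
  ultimately show ?thesis using assms by (simp add: power_divide power_mult_distrib divide_le_eq field_simps)
qed

lemma binomial_le_exp_power:
  assumes "1 \<le> t"
  shows "real (n choose t) \<le> (exp 1 * real n / real t) ^ t"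
proof -
  have "real (n choose t) * fact t \<le> real n ^ t"
    using binomial_fact_pow[of n t] by (metis of_nat_fact of_nat_le_iff of_nat_mult of_nat_power)
  then have "real (n choose t) \<le> real n ^ t / fact t" by (simp add: le_divide_eq)
  also have "\<dots> \<le> (exp 1 * real n / real t) ^ t" using assms by (intro power_div_fact_le) auto
  finally show ?thesis .
qed

lemma binomial_mult_power_le:
  assumes "N \<le> N'" "0 \<le> p"
  shows "real (N choose a) * p ^ a \<le> (real N' * p) ^ a / fact a"
proof -
  have "real (N choose a) * fact a \<le> real N ^ a"
    using binomial_fact_pow[of N a] by (metis of_nat_fact of_nat_le_iff of_nat_mult of_nat_power)
  also have "\<dots> \<le> real N' ^ a" using assms by (intro power_mono) auto
  finally have "real (N choose a) \<le> real N' ^ a / fact a" by (simp add: le_divide_eq)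
  then have "real (N choose a) * p ^ a \<le> real N' ^ a / fact a * p ^ a"
    using assms by (intro mult_right_mono) auto
  then show ?thesis by (simp add: power_mult_distrib)
qed

lemma prob_exists_dense_pair_le:
  fixes a :: "nat \<Rightarrow> nat"
  assumes p: "0 \<le> p" "p \<le> 1" and T: "finite T"
  shows "measure_pmf.prob (gnp n p)
      {E. \<exists>t\<in>T. \<exists>X Y. X \<subseteq> {..<n} \<and> card X = t \<and> Y \<subseteq> {..<n} \<and> card Y = k * t \<and>
                        a t \<le> card (E \<inter> cross_pairs X Y)}
    \<le> (\<Sum>t\<in>T. real (n choose t) * real (n choose (k * t)) * ((real (t * (k * t)) * p) ^ a t / fact (a t)))"
proof -
  define Xs where "Xs = (\<lambda>t. {X. X \<subseteq> {..<n} \<and> card X = t})"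
  define Bad where "Bad = (\<lambda>t X Y. {E. a t \<le> card (E \<inter> cross_pairs X Y)})"
  let ?P = "measure_pmf.prob (gnp n p)"
  have fin: "finite (Xs t)" for t unfolding Xs_def by auto
  have card_Xs: "card (Xs t) = n choose t" for t unfolding Xs_def using n_subsets[of "{..<n}" t] by simp
  have bad: "?P (Bad t X Y) \<le> (real (t * (k * t)) * p) ^ a t / fact (a t)"
    if "X \<in> Xs t" "Y \<in> Xs (k * t)" for t X Y
  proof -
    have "finite X" "finite Y" using that unfolding Xs_def by (auto intro: finite_subset)
    then have "?P (Bad t X Y) \<le> real (card (cross_pairs X Y) choose a t) * p ^ a t"
      unfolding Bad_def using p by (intro prob_gnp_card_inter_ge finite_cross_pairs)
    also have "\<dots> \<le> (real (t * (k * t)) * p) ^ a t / fact (a t)"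
      using card_cross_pairs_le[OF \<open>finite X\<close> \<open>finite Y\<close>] that p unfolding Xs_def
      by (intro binomial_mult_power_le) auto
    finally show ?thesis .
  qed
  have "?P (\<Union>t\<in>T. \<Union>X\<in>Xs t. \<Union>Y\<in>Xs (k * t). Bad t X Y)
      \<le> (\<Sum>t\<in>T. ?P (\<Union>X\<in>Xs t. \<Union>Y\<in>Xs (k * t). Bad t X Y))"
    using T by (intro measure_pmf.finite_measure_subadditive_finite) auto
  also have "\<dots> \<le> (\<Sum>t\<in>T. \<Sum>X\<in>Xs t. ?P (\<Union>Y\<in>Xs (k * t). Bad t X Y))"
    using fin by (intro sum_mono measure_pmf.finite_measure_subadditive_finite) auto
  also have "\<dots> \<le> (\<Sum>t\<in>T. \<Sum>X\<in>Xs t. \<Sum>Y\<in>Xs (k * t). ?P (Bad t X Y))"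
    using fin by (intro sum_mono measure_pmf.finite_measure_subadditive_finite) auto
  also have "\<dots> \<le> (\<Sum>t\<in>T. \<Sum>X\<in>Xs t. \<Sum>Y\<in>Xs (k * t). (real (t * (k * t)) * p) ^ a t / fact (a t))"
    using bad by (intro sum_mono) auto
  also have "\<dots> = (\<Sum>t\<in>T. real (n choose t) * real (n choose (k * t)) *
      ((real (t * (k * t)) * p) ^ a t / fact (a t)))"
    by (simp add: card_Xs mult.assoc)
  finally show ?thesis
    by (rule order_trans[rotated]) (auto intro!: measure_pmf.finite_measure_mono simp: Xs_def Bad_def)
qed

lemma sum_power_le_twice:
  fixes q :: real assumes "0 \<le> q" "q \<le> 1/2"
  shows "(\<Sum>t\<in>{1..N}. q ^ t) \<le> 2 * q"
proof -
  have "(\<Sum>t\<in>{1..N}. q ^ t) \<le> 2 * q - 2 * q ^ (N + 1)"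
  proof (induction N)
    case (Suc N)
    have "2 * q ^ (N + 2) \<le> q ^ (N + 1)"
      using assms mult_right_mono[of "2 * q" 1 "q ^ (N + 1)"] by (simp add: ac_simps)
    then show ?case using Suc by simp
  qed simp
  moreover have "0 \<le> q ^ (N + 1)" using assms by simp
  ultimately show ?thesis by linarith
qed

lemma exp_power_mult_powr_antimono:
  fixes U u c D :: real and k :: nat
  assumes "0 < U" "U \<le> u" "0 < c" "real k + 1 \<le> D"
  shows "(exp 1 * u) ^ (k + 1) * (c / u) powr D \<le> (exp 1 * U) ^ (k + 1) * (c / U) powr D"
proof -
  define r where "r = u / U"
  have r: "1 \<le> r" using assms unfolding r_def by simp
  have "r ^ (k + 1) = r powr real (k + 1)" using r by (subst powr_realpow) auto
  also have "\<dots> \<le> r powr D" using r assms by (intro powr_mono) auto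
  finally have ratio: "r ^ (k + 1) / r powr D \<le> 1" using r by simp
  have "(exp 1 * u) ^ (k + 1) = (exp 1 * U) ^ (k + 1) * r ^ (k + 1)"
    unfolding r_def using assms by (simp flip: power_mult_distrib)
  moreover have "(c / u) powr D = (c / U) powr D / r powr D"
    unfolding r_def using assms by (simp add: powr_divide)
  ultimately have "(exp 1 * u) ^ (k + 1) * (c / u) powr D
      = (exp 1 * U) ^ (k + 1) * (c / U) powr D * (r ^ (k + 1) / r powr D)"
    by simp
  also have "\<dots> \<le> (exp 1 * U) ^ (k + 1) * (c / U) powr D"
    using ratio assms by (intro mult_left_le) auto
  finally show ?thesis .
qed

lemma binomial_pair_le:
  assumes "1 \<le> t" "1 \<le> k"
  shows "real (n choose t) * real (n choose (k * t)) \<le> (exp 1 * real n / real t) ^ ((k + 1) * t)"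
proof -
  have "real (n choose (k * t)) \<le> (exp 1 * real n / real (k * t)) ^ (k * t)"
    using assms by (intro binomial_le_exp_power) simp
  also have "\<dots> \<le> (exp 1 * real n / real t) ^ (k * t)"
    using assms by (intro power_mono divide_left_mono) auto
  finally have "real (n choose t) * real (n choose (k * t))
      \<le> (exp 1 * real n / real t) ^ t * (exp 1 * real n / real t) ^ (k * t)"
    using assms by (intro mult_mono binomial_le_exp_power) auto
  then show ?thesis by (simp add: power_add algebra_simps)
qed

lemma dense_pair_term_le:
  fixes n t k a :: nat and p L D c :: real
  assumes t: "1 \<le> t" and p: "0 \<le> p" "p \<le> 2 * L / real n" and D: "0 < D" "D * real t \<le> real a"
    and c: "0 < c" "2 * exp 1 * real k * L / D \<le> c" "c * real t \<le> real n"
  shows "(real (t * (k * t)) * p) ^ a / fact a \<le> ((c * real t / real n) powr D) ^ t"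
proof -
  have "0 < real a" using D t by (smt (verit) of_nat_le_iff mult_pos_pos of_nat_1)
  have "0 < real n" using c t by (smt (verit) of_nat_le_iff mult_pos_pos of_nat_1)
  have "exp 1 * (real (t * (k * t)) * p) / real a \<le> exp 1 * (real (t * (k * t)) * p) / (D * real t)"
    using D t p \<open>0 < real a\<close> by (intro divide_left_mono) auto
  also have "\<dots> = exp 1 * real k * real t * p / D" using t by (simp add: field_simps)
  also have "\<dots> \<le> exp 1 * real k * real t * (2 * L / real n) / D"
    using p D by (intro divide_right_mono mult_left_mono) auto
  also have "\<dots> = (2 * exp 1 * real k * L / D) * (real t / real n)" by (simp add: field_simps)
  also have "\<dots> \<le> c * (real t / real n)" using c by (intro mult_right_mono) auto
  finally have base: "exp 1 * (real (t * (k * t)) * p) / real a \<le> c * real t / real n" by simp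
  have "(real (t * (k * t)) * p) ^ a / fact a \<le> (exp 1 * (real (t * (k * t)) * p) / real a) ^ a"
    using p \<open>0 < real a\<close> by (intro power_div_fact_le) auto
  also have "\<dots> \<le> (c * real t / real n) ^ a" using base p by (intro power_mono) auto
  also have "\<dots> = (c * real t / real n) powr real a" using c t \<open>0 < real n\<close> by (simp add: powr_realpow)
  also have "\<dots> \<le> (c * real t / real n) powr (D * real t)"
    using c t D \<open>0 < real n\<close> by (intro powr_mono') auto
  also have "\<dots> = ((c * real t / real n) powr D) ^ t"
    using c t \<open>0 < real n\<close> by (simp add: powr_powr[symmetric] powr_realpow)
  finally show ?thesis .
qed

lemma dense_pair_summand_le:
  fixes n t k a :: nat and p L D c U :: real
  assumes t: "1 \<le> t" and k: "1 \<le> k" and U: "0 < U" "U * real t \<le> real n"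
    and p: "0 \<le> p" "p \<le> 2 * L / real n" and D: "real k + 1 \<le> D" "D * real t \<le> real a"
    and c: "0 < c" "2 * exp 1 * real k * L / D \<le> c" "c \<le> U"
  shows "real (n choose t) * real (n choose (k * t)) * ((real (t * (k * t)) * p) ^ a / fact a)
          \<le> ((exp 1 * U) ^ (k + 1) * (c / U) powr D) ^ t"
proof -
  define u where "u = real n / real t"
  have "U \<le> u" using U t unfolding u_def by (simp add: le_divide_eq)
  have "c * real t \<le> real n" using c U t by (smt (verit) mult_right_mono of_nat_0_le_iff)
  have "real (n choose t) * real (n choose (k * t)) * ((real (t * (k * t)) * p) ^ a / fact a)
      \<le> (exp 1 * u) ^ ((k + 1) * t) * ((c / u) powr D) ^ t"
    using binomial_pair_le[OF t k, of n] D p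
      dense_pair_term_le[OF t p _ D(2) c(1,2) \<open>c * real t \<le> real n\<close>]
    unfolding u_def by (intro mult_mono) (auto simp: mult.commute)
  also have "\<dots> = ((exp 1 * u) ^ (k + 1) * (c / u) powr D) ^ t"
    by (simp only: power_mult power_mult_distrib)
  also have "\<dots> \<le> ((exp 1 * U) ^ (k + 1) * (c / U) powr D) ^ t"
    using exp_power_mult_powr_antimono[OF U(1) \<open>U \<le> u\<close> c(1) D(1)] \<open>U \<le> u\<close> U by (intro power_mono) auto
  finally show ?thesis .
qed

lemma dense_pair_of_not_matching_property:
  fixes n :: nat and d :: real
  defines "k \<equiv> nat \<lfloor>ln (real n) powr 0.2\<rfloor>" and "N \<equiv> nat \<lfloor>real n / ln (real n) powr 0.9\<rfloor>"
  assumes E: "\<not> matching_property n d E" and kN: "k * N \<le> n"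
  shows "\<exists>t\<in>{1..N}. \<exists>X Y. X \<subseteq> {..<n} \<and> card X = t \<and> Y \<subseteq> {..<n} \<and> card Y = k * t \<and>
           nat \<lceil>ln (real n) / (ln (ln (real n)))\<^sup>2 * real t\<rceil> \<le> card (E \<inter> cross_pairs X Y)"
proof -
  obtain S W E' where S: "S \<subseteq> {..<n}" "real (card S) \<le> real n / ln (real n) powr 0.9"
    and W: "W \<subseteq> {..<n}" "S \<inter> W = {}" and E': "E' \<subseteq> E" "E' \<subseteq> cross_pairs S W"
    and deg: "\<forall>v\<in>S. ln (real n) / (ln (ln (real n)))\<^sup>2 \<le> real (deg E' v)"
    and no_match: "\<not> (\<exists>M\<subseteq>E'. (\<forall>s\<in>S. deg M s = k) \<and> (\<forall>w\<in>W. deg M w \<le> 1))"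
    using E unfolding matching_property_def cross_pairs_def k_def by blast
  have "card S \<le> N" using S(2) unfolding N_def by (simp add: le_nat_floor)
  then have "k * card S \<le> n" using kN by (meson le_trans mult_le_mono2)
  then obtain X Y where "X \<subseteq> S" "X \<noteq> {}" "Y \<subseteq> {..<n}" "card Y = k * card X"
    "ln (real n) / (ln (ln (real n)))\<^sup>2 * real (card X) \<le> real (card (E \<inter> cross_pairs X Y))"
    using dense_pair_of_no_k_matching[OF S(1) W E' deg no_match] by blast
  moreover have "card X \<in> {1..N}"
  proof -
    have "finite S" using S(1) by (rule finite_subset) simp
    then show ?thesis using \<open>X \<subseteq> S\<close> \<open>X \<noteq> {}\<close> \<open>card S \<le> N\<close> card_mono[of S X]
      by (auto simp: Suc_le_eq card_gt_0_iff intro: finite_subset)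
  qed
  ultimately show ?thesis using S(1) by (auto simp: nat_ceiling_le_eq)
qed

text \<open>The t-th term of the union bound is at most the t-th power of this quantity: it is the bound
  of dense_pair_summand_le with the ratio n/t replaced by its least possible value log^0.9 n.\<close>

definition failure_bound :: "nat \<Rightarrow> real" where
  "failure_bound n =
     (exp 1 * ln (real n) powr 0.9) powr (ln (real n) powr 0.2 + 1) *
     (2 * exp 1 * ln (real n) powr 0.2 * (ln (ln (real n)))\<^sup>2 / ln (real n) powr 0.9)
       powr (ln (real n) / (ln (ln (real n)))\<^sup>2)"

lemma failure_bound_tendsto_zero: "failure_bound \<longlonglongrightarrow> 0"
  unfolding failure_bound_def by real_asymp

lemma power_le_failure_bound:
  fixes n k :: nat
  defines "L \<equiv> ln (real n)"
  assumes L: "1 < L" and kL: "real k \<le> L powr 0.2"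
  shows "(exp 1 * L powr 0.9) ^ (k + 1) * (2 * exp 1 * L powr 0.2 * (ln L)\<^sup>2 / L powr 0.9) powr (L / (ln L)\<^sup>2)
    \<le> failure_bound n"
  unfolding failure_bound_def L_def[symmetric]
proof (intro mult_right_mono)
  have "1 \<le> exp 1 * L powr 0.9"
    using L mult_mono[of 1 "exp 1" 1 "L powr 0.9"] by (simp add: ge_one_powr_ge_zero)
  then have "(exp 1 * L powr 0.9) ^ (k + 1) = (exp 1 * L powr 0.9) powr real (k + 1)"
    by (subst powr_realpow) auto
  also have "\<dots> \<le> (exp 1 * L powr 0.9) powr (L powr 0.2 + 1)"
    using \<open>1 \<le> exp 1 * L powr 0.9\<close> kL by (intro powr_mono) auto
  finally show "(exp 1 * L powr 0.9) ^ (k + 1) \<le> (exp 1 * L powr 0.9) powr (L powr 0.2 + 1)" .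
qed simp

lemma prob_not_matching_property_le:
  fixes n :: nat and p d :: real
  defines "L \<equiv> ln (real n)"
  assumes p: "0 < p" "p \<le> 2 * L / real n" "2 * L / real n \<le> 1"
    and lnL: "1 < ln L" and DL: "L powr 0.2 + 1 \<le> L / (ln L)\<^sup>2"
    and cU: "2 * exp 1 * L powr 0.2 * (ln L)\<^sup>2 \<le> L powr 0.9"
    and q: "failure_bound n \<le> 1/2"
  shows "measure_pmf.prob (gnp n p) {E. \<not> matching_property n d E} \<le> 2 * failure_bound n"
proof -
  define k where "k = nat \<lfloor>L powr 0.2\<rfloor>"
  define D where "D = L / (ln L)\<^sup>2"
  define U where "U = L powr 0.9"
  define c where "c = 2 * exp 1 * L powr 0.2 * (ln L)\<^sup>2"
  define N where "N = nat \<lfloor>real n / U\<rfloor>"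
  define a where "a = (\<lambda>t::nat. nat \<lceil>D * real t\<rceil>)"
  define summand where "summand = (\<lambda>t. real (n choose t) * real (n choose (k * t)) *
    ((real (t * (k * t)) * p) ^ a t / fact (a t)))"
  have n: "0 < n" using p by (cases n) auto
  have "L \<noteq> 0" using lnL by auto
  moreover have "0 \<le> L" unfolding L_def using n by simp
  ultimately have "0 < L" by simp
  then have L: "1 < L" using ln_less_self[of L] lnL by linarith
  have U: "1 \<le> U" unfolding U_def using L by (simp add: ge_one_powr_ge_zero)
  have kL: "real k \<le> L powr 0.2" unfolding k_def using L by simp
  have k: "1 \<le> k" unfolding k_def using L by (simp add: le_nat_floor ge_one_powr_ge_zero)
  have NU: "real N \<le> real n / U" unfolding N_def using U by simp
  have "L powr 0.2 \<le> U" unfolding U_def using L by (intro powr_mono) auto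
  then have "real k * real N \<le> U * (real n / U)" using kL NU U by (intro mult_mono) auto
  then have kN: "k * N \<le> n" using U by (simp flip: of_nat_mult)
  have Dk: "real k + 1 \<le> D" using kL DL unfolding D_def by simp
  have c0: "0 < c" unfolding c_def using L lnL by simp
  have "2 * exp 1 * real k * L / D = 2 * exp 1 * real k * (ln L)\<^sup>2"
    unfolding D_def using L lnL by (simp add: field_simps)
  also have "\<dots> \<le> c" unfolding c_def using kL by (intro mult_right_mono mult_left_mono) auto
  finally have cD: "2 * exp 1 * real k * L / D \<le> c" .
  have "{E. \<not> matching_property n d E} \<subseteq> {E. \<exists>t\<in>{1..N}. \<exists>X Y. X \<subseteq> {..<n} \<and> card X = t \<and>
      Y \<subseteq> {..<n} \<and> card Y = k * t \<and> a t \<le> card (E \<inter> cross_pairs X Y)}"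
    using dense_pair_of_not_matching_property[of n d] kN unfolding a_def D_def k_def N_def U_def L_def
    by blast
  then have "measure_pmf.prob (gnp n p) {E. \<not> matching_property n d E} \<le> (\<Sum>t\<in>{1..N}. summand t)"
    unfolding summand_def using p
    by (intro order_trans[OF measure_pmf.finite_measure_mono prob_exists_dense_pair_le]) auto
  also have "\<dots> \<le> (\<Sum>t\<in>{1..N}. failure_bound n ^ t)"
  proof (intro sum_mono)
    fix t assume t: "t \<in> {1..N}"
    have "real t \<le> real n / U" using t NU by simp
    then have Ut: "U * real t \<le> real n" using U by (simp add: le_divide_eq mult.commute)
    have Dt: "D * real t \<le> real (a t)" unfolding a_def by linarith
    have "summand t \<le> ((exp 1 * U) ^ (k + 1) * (c / U) powr D) ^ t"
      unfolding summand_def using t k U Ut p Dk Dt c0 cD cU L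
      by (intro dense_pair_summand_le) (simp_all add: c_def U_def)
    also have "\<dots> \<le> failure_bound n ^ t"
      using power_le_failure_bound[OF L[unfolded L_def] kL[unfolded L_def]] U
      unfolding L_def[symmetric] U_def c_def D_def by (intro power_mono) auto
    finally show "summand t \<le> failure_bound n ^ t" .
  qed
  also have "\<dots> \<le> 2 * failure_bound n"
    using q by (intro sum_power_le_twice) (simp_all add: failure_bound_def)
  finally show ?thesis .
qed

lemma eventually_prob_not_matching_property_le:
  assumes "eventually (\<lambda>n. ln (real n) / real n \<le> p n \<and> p n \<le> 2 * ln (real n) / real n) sequentially"
  shows "eventually (\<lambda>n. measure_pmf.prob (gnp n (p n)) {E. \<not> matching_property n (d n) E}
           \<le> 2 * failure_bound n) sequentially"
proof -
  have "eventually (\<lambda>n. failure_bound n \<le> 1/2) sequentially"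
    using order_tendstoD(2)[OF failure_bound_tendsto_zero, of "1/2"] by (auto elim: eventually_mono)
  moreover have "eventually (\<lambda>n::nat. 0 < ln (real n) / real n) sequentially"
    and "eventually (\<lambda>n::nat. 2 * ln (real n) / real n \<le> 1) sequentially"
    and "eventually (\<lambda>n::nat. 1 < ln (ln (real n))) sequentially"
    and "eventually (\<lambda>n::nat. ln (real n) powr 0.2 + 1 \<le> ln (real n) / (ln (ln (real n)))\<^sup>2) sequentially"
    and "eventually (\<lambda>n::nat. 2 * exp 1 * ln (real n) powr 0.2 * (ln (ln (real n)))\<^sup>2
           \<le> ln (real n) powr 0.9) sequentially"
    by real_asymp+
  ultimately show ?thesis using assms
    by eventually_elim (intro prob_not_matching_property_le; auto)
qed

theorem lemma8:
  fixes p :: "nat \<Rightarrow> real" and d :: "nat \<Rightarrow> real"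
  assumes "eventually (\<lambda>n. ln (real n) / real n \<le> p n \<and> p n \<le> 2 * ln (real n) / real n) sequentially"
    and "d \<longlonglongrightarrow> 0"
  shows "(\<lambda>n. measure_pmf.prob (gnp n (p n)) {E. matching_property n (d n) E}) \<longlonglongrightarrow> 1"
proof (rule tendsto_sandwich)
  have "measure_pmf.prob (gnp n (p n)) {E. matching_property n (d n) E}
      = 1 - measure_pmf.prob (gnp n (p n)) {E. \<not> matching_property n (d n) E}" for n
    using measure_pmf.prob_compl[of "{E. \<not> matching_property n (d n) E}" "gnp n (p n)"]
    by (simp add: Compl_eq_Diff_UNIV[symmetric] Collect_neg_eq[symmetric])
  then show "eventually (\<lambda>n. 1 - 2 * failure_bound n
      \<le> measure_pmf.prob (gnp n (p n)) {E. matching_property n (d n) E}) sequentially"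
    using eventually_prob_not_matching_property_le[OF assms(1), of d] by (auto elim: eventually_mono)
  show "eventually (\<lambda>n. measure_pmf.prob (gnp n (p n)) {E. matching_property n (d n) E} \<le> 1) sequentially"
    by simp
  show "(\<lambda>n. 1 - 2 * failure_bound n) \<longlonglongrightarrow> 1"
    using tendsto_diff[OF tendsto_const tendsto_mult[OF tendsto_const failure_bound_tendsto_zero]] by simp
qed (rule tendsto_const)

end
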